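(* Let $a_0=0$ and let $a_1<a_2<\cdots$ be the increasing enumeration of $\{m\ge1:\ c_m=1\}$. Then $$\liminf_{n\to\infty}\frac{a_n}{n^2}=\frac16,\qquad \limsup_{n\to\infty}\frac{a_n}{n^2}=\frac12,$$ and the set $\left\{\frac{a_n}{n^2}:\ n\ge1\right\}$ is dense (in the Euclidean topology) in the interval $\left[\frac16,\frac12\right]$.
   Context: For $n\in\mathbb{N}$ let $s_2(n)$ be the sum of the binary digits of $n$ and $t_n=s_2(n)\bmod 2$ (the Prouhet–Thue–Morse sequence). Let $F(X)=\sum_{n\ge1}t_nX^n\in\mathbb{F}_2[[X]]$ and let $G(X)=\sum_{n\ge1}c_nX^n\in\mathbb{F}_2[[X]]$ be its compositional inverse, i.e. $F(G(X))=G(F(X))=X$. The $c_n$ are identified with integers in $\{0,1\}$. *)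

theory Defs
  imports "HOL-Analysis.Analysis" "HOL-Library.Z2" "HOL-Computational_Algebra.Formal_Power_Series"
begin

fun s2 :: "nat \<Rightarrow> nat" where
  "s2 n = (if n = 0 then 0 else n mod 2 + s2 (n div 2))"

definition tm :: "nat \<Rightarrow> bit" where
  "tm n = of_nat (s2 n mod 2)"

definition TM_F :: "bit fps" where
  "TM_F = Abs_fps (\<lambda>n. if n = 0 then 0 else tm n)"

end

(*
  Over F_2 the digit recursions t_{2n} = t_n and t_{2n+1} = t_n + 1 give the cubic relation
  (1+X)^3 F^2 = (1+X)^2 F + X.  Substituting X := G shows that X (1+G) + 1 is a cube root of
  1 + X.  Another cube root is (1+X) P, where P is the indicator series of the numbers whose
  base-4 digits all lie in {0,2}, i.e. of the numbers 2 spread(j), where spread(j) reads the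
  binary digits of j in base 4: these numbers are exactly those of the form 4m or 4m + 2 with m
  of the same kind, which means P = (1+X)^2 P^4.  Cube roots with constant term 1 are unique, so
  c_n = 1 exactly when n or n+1 equals some 2 spread(j), whence a_{2j} = 2 spread(j) and
  a_{2j-1} = 2 spread(j) - 1.

  Finally j^2/3 < spread(j) <= j^2, with spread(2^k) = 4^k and
  3 spread(2^k - 1) = (2^k - 1)^2 + 2 (2^k - 1), which yields the liminf and the limsup.  As j
  runs from 2^k to 2^(k+1) - 1, the ratio spread(j) / (2 j^2) falls from 1/2 to nearly 1/6 in
  steps of size at most 1/j, which gives density.
*)

theory Submission
  imports Defs "HOL-Real_Asymp.Real_Asymp"
begin

section \<open>Spreading binary digits into base 4\<close>

fun spread :: "nat \<Rightarrow> nat" where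
  "spread n = (if n = 0 then 0 else 4 * spread (n div 2) + n mod 2)"
declare spread.simps [simp del]

lemma spread_0 [simp]: "spread 0 = 0"
  by (simp add: spread.simps)

lemma spread_double [simp]: "spread (2 * m) = 4 * spread m"
  by (subst spread.simps) auto

lemma spread_Suc_double [simp]: "spread (Suc (2 * m)) = 4 * spread m + 1"
  by (subst spread.simps) auto

lemma spread_1 [simp]: "spread (Suc 0) = 1"
  using spread_Suc_double[of 0] by simp

lemma spread_le_square: "spread j \<le> j^2"
  by (induction j rule: nat_bit_induct) (simp_all add: power2_eq_square)

lemma square_add_double_le_spread: "j^2 + 2 * j \<le> 3 * spread j"
  by (induction j rule: nat_bit_induct) (simp_all add: power2_eq_square)

lemma spread_power2: "spread (2^k) = 4^k"
  by (induction k) simp_all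

lemma spread_less_Suc: "spread j < spread (Suc j)"
proof (induction j rule: nat_bit_induct)
  case (odd n)
  have "Suc (Suc (2 * n)) = 2 * Suc n"
    by simp
  with odd show ?case
    by (simp only: spread_double spread_Suc_double)
qed simp_all

lemma strict_mono_spread: "strict_mono spread"
  by (simp add: strict_mono_Suc_iff spread_less_Suc)

lemma spread_pos: "0 < j \<Longrightarrow> 0 < spread j"
  using strict_monoD[OF strict_mono_spread, of 0 j] by simp

lemma spread_mersenne: "3 * spread (2^k - 1) = (2^k - 1)^2 + 2 * (2^k - 1)"
proof (induction k)
  case (Suc k)
  define m :: nat where "m = 2^k - 1"
  have "(1::nat) \<le> 2^k"
    by simp
  then have eq: "2^Suc k - 1 = Suc (2 * m)"
    unfolding m_def power_Suc by linarith
  have "3 * spread (Suc (2 * m)) = 4 * (3 * spread m) + 3"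
    by simp
  also have "\<dots> = 4 * (m^2 + 2 * m) + 3"
    using Suc.IH by (simp only: m_def)
  also have "\<dots> = (Suc (2 * m))^2 + 2 * Suc (2 * m)"
    by (simp add: power2_eq_square algebra_simps)
  finally show ?case
    by (simp only: eq)
qed simp

section \<open>Power series in characteristic 2\<close>

lemma sum_palindromic_char2:
  fixes g :: "nat \<Rightarrow> 'a::ring_1"
  assumes char2: "(2::'a) = 0" and palindromic: "\<And>i. i \<le> n \<Longrightarrow> g (n - i) = g i"
  shows "(\<Sum>i=0..n. g i) = (if even n then g (n div 2) else 0)"
proof -
  let ?low = "{i. 2 * i < n}" and ?high = "{i. i \<le> n \<and> n < 2 * i}" and ?mid = "{i. 2 * i = n}"
  have fin: "finite ?low" "finite ?high" "finite ?mid"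
    by (auto intro: finite_subset[of _ "{..n}"])
  have "{0..n} = ?low \<union> ?high \<union> ?mid" by auto
  moreover have "sum g (?low \<union> ?high \<union> ?mid) = sum g (?low \<union> ?high) + sum g ?mid"
    by (rule sum.union_disjoint) (use fin in auto)
  moreover have "sum g (?low \<union> ?high) = sum g ?low + sum g ?high"
    by (rule sum.union_disjoint) (use fin in auto)
  ultimately have "(\<Sum>i=0..n. g i) = sum g ?low + sum g ?high + sum g ?mid"
    by simp
  moreover have "sum g ?high = sum g ?low"
    by (rule sum.reindex_bij_witness[where i="\<lambda>i. n - i" and j="\<lambda>i. n - i"])
       (auto simp: palindromic)
  moreover have "sum g ?low + sum g ?low = 0"
    using char2 by (metis mult_2 mult_zero_left)
  moreover have "?mid = (if even n then {n div 2} else {})" by auto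
  ultimately show ?thesis by (simp add: add.commute)
qed

lemma fps_square_nth_char2:
  fixes f :: "'a::comm_ring_1 fps"
  assumes "(2::'a) = 0"
  shows "fps_nth (f^2) n = (if even n then (fps_nth f (n div 2))^2 else 0)"
proof -
  have "fps_nth (f^2) n = (\<Sum>i=0..n. fps_nth f i * fps_nth f (n - i))"
    by (simp add: power2_eq_square fps_mult_nth)
  also have "\<dots> = (if even n then fps_nth f (n div 2) * fps_nth f (n - n div 2) else 0)"
    by (rule sum_palindromic_char2) (use assms in \<open>simp_all add: mult.commute\<close>)
  finally show ?thesis by (auto simp: power2_eq_square elim!: evenE)
qed

lemma fps_square_nth_bit: "fps_nth ((f::bit fps)^2) n = (if even n then fps_nth f (n div 2) else 0)"
  by (simp add: fps_square_nth_char2)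

lemma fps_power4_nth_bit: "fps_nth ((f::bit fps)^4) n = (if 4 dvd n then fps_nth f (n div 4) else 0)"
proof -
  have "fps_nth (f^4) n = fps_nth ((f^2)^2) n"
    by (simp flip: power_mult)
  also have "\<dots> = (if even n \<and> even (n div 2) then fps_nth f (n div 2 div 2) else 0)"
    by (simp only: fps_square_nth_bit) simp
  also have "even n \<and> even (n div 2) \<longleftrightarrow> 4 dvd n"
    by presburger
  finally show ?thesis
    by (simp add: div_mult2_eq[symmetric])
qed

lemma fps_two_bit: "(2::bit fps) = 0"
  by (rule fps_ext) (simp add: fps_numeral_nth)

lemma fps_one_plus_X_square_bit: "(1 + fps_X :: bit fps)^2 = 1 + fps_X^2"
  by (simp add: power2_eq_square algebra_simps flip: mult_2)

lemma fps_one_plus_X_square_mult_nth_bit: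
  "fps_nth ((1 + fps_X)^2 * (f::bit fps)) n = fps_nth f n + (if n < 2 then 0 else fps_nth f (n - 2))"
  by (simp add: fps_one_plus_X_square_bit distrib_right fps_X_power_mult_nth)

section \<open>The cubic equation of the Thue--Morse series\<close>

lemma of_nat_mod2_bit: "(of_nat (m mod 2) :: bit) = of_nat m"
proof -
  have "(of_nat m :: bit) = of_nat (2 * (m div 2) + m mod 2)"
    by simp
  also have "\<dots> = of_nat (m mod 2)"
    by (simp only: of_nat_add of_nat_mult) simp
  finally show ?thesis ..
qed

declare s2.simps [simp del]

lemma s2_0 [simp]: "s2 0 = 0"
  by (simp add: s2.simps)

lemma s2_double: "s2 (2 * k) = s2 k"
  by (subst s2.simps) simp

lemma s2_Suc_double: "s2 (Suc (2 * k)) = Suc (s2 k)"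
  by (subst s2.simps) simp

lemma tm_double: "tm (2 * k) = tm k"
  by (simp add: tm_def s2_double)

lemma tm_Suc_double: "tm (Suc (2 * k)) = tm k + 1"
  by (simp add: tm_def s2_Suc_double of_nat_mod2_bit)

lemma TM_F_nth: "fps_nth TM_F n = tm n"
  by (simp add: TM_F_def tm_def)

definition odd_powers :: "bit fps" where
  "odd_powers = Abs_fps (\<lambda>n. of_bool (odd n))"

lemma TM_F_square_eq: "(1 + fps_X) * TM_F^2 = TM_F + odd_powers"
proof (rule fps_ext)
  fix n :: nat
  show "fps_nth ((1 + fps_X) * TM_F^2) n = fps_nth (TM_F + odd_powers) n"
  proof (cases "even n")
    case True
    then obtain k where "n = 2 * k" by (rule evenE)
    then show ?thesis
      by (cases "k = 0")
         (simp_all add: fps_mult_fps_X_plus_1_nth fps_square_nth_bit TM_F_nth odd_powers_def tm_double)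
  next
    case False
    then obtain k where "n = Suc (2 * k)" by (auto elim!: oddE)
    then show ?thesis
      by (simp add: fps_mult_fps_X_plus_1_nth fps_square_nth_bit TM_F_nth odd_powers_def tm_Suc_double)
  qed
qed

lemma one_plus_X_square_odd_powers: "(1 + fps_X)^2 * odd_powers = fps_X"
  by (rule fps_ext) (auto simp: fps_one_plus_X_square_mult_nth_bit odd_powers_def; presburger)

lemma TM_F_cubic_eq: "(1 + fps_X)^3 * TM_F^2 = (1 + fps_X)^2 * TM_F + fps_X"
proof -
  have "(1 + fps_X)^3 * TM_F^2 = (1 + fps_X)^2 * ((1 + fps_X) * TM_F^2)"
    by (simp add: power3_eq_cube power2_eq_square mult.assoc)
  also have "\<dots> = (1 + fps_X)^2 * TM_F + (1 + fps_X)^2 * odd_powers"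
    by (simp add: TM_F_square_eq distrib_left)
  finally show ?thesis
    by (simp add: one_plus_X_square_odd_powers)
qed

section \<open>The compositional inverse\<close>

lemma TM_F_inverse_cube:
  fixes G :: "bit fps"
  assumes G0: "fps_nth G 0 = 0" and inv: "fps_compose TM_F G = fps_X"
  shows "(fps_X * (1 + G) + 1)^3 = 1 + fps_X"
proof -
  have "(1 + fps_X) oo G = 1 + G"
    using G0 by (simp add: fps_compose_add_distrib)
  moreover have "((1 + fps_X)^3 * TM_F^2) oo G = ((1 + fps_X)^2 * TM_F + fps_X) oo G"
    by (simp only: TM_F_cubic_eq)
  ultimately have cubic: "(1 + G)^3 * fps_X^2 = (1 + G)^2 * fps_X + G"
    using G0 inv
    by (simp add: fps_compose_mult_distrib fps_compose_add_distrib flip: fps_compose_power)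
  \<comment> \<open>In characteristic 2 the difference is X times the substituted cubic relation.\<close>
  have "(fps_X * (1 + G) + 1)^3 - (1 + fps_X) =
      fps_X * ((1 + G)^3 * fps_X^2 - ((1 + G)^2 * fps_X + G))
      + 2 * (2 * (fps_X * (1 + G))^2 + 2 * (fps_X * (1 + G)) - fps_X)"
    by algebra
  then show ?thesis
    by (simp add: cubic fps_two_bit)
qed

lemma double_spread_mem_iff:
  "n \<in> range (\<lambda>j. 2 * spread j) \<longleftrightarrow>
     (n mod 4 = 0 \<or> n mod 4 = 2) \<and> n div 4 \<in> range (\<lambda>j. 2 * spread j)"
proof
  assume "n \<in> range (\<lambda>j. 2 * spread j)"
  then obtain j where n: "n = 2 * spread j" by blast
  obtain m where "j = 2 * m \<or> j = Suc (2 * m)" by (metis oddE evenE Suc_eq_plus1)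
  then have "n = 4 * (2 * spread m) \<or> n = 4 * (2 * spread m) + 2"
    using n by auto
  then have "(n mod 4 = 0 \<or> n mod 4 = 2) \<and> n div 4 = 2 * spread m"
    by presburger
  then show "(n mod 4 = 0 \<or> n mod 4 = 2) \<and> n div 4 \<in> range (\<lambda>j. 2 * spread j)"
    by blast
next
  assume "(n mod 4 = 0 \<or> n mod 4 = 2) \<and> n div 4 \<in> range (\<lambda>j. 2 * spread j)"
  then obtain j where "n mod 4 = 0 \<or> n mod 4 = 2" and j: "n div 4 = 2 * spread j"
    by auto
  then have "n = 2 * spread (2 * j) \<or> n = 2 * spread (Suc (2 * j))"
    unfolding spread_double spread_Suc_double by presburger
  then show "n \<in> range (\<lambda>j. 2 * spread j)"
    by blast
qed

definition spread_fps :: "bit fps" where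
  "spread_fps = Abs_fps (\<lambda>n. of_bool (n \<in> range (\<lambda>j. 2 * spread j)))"

lemma spread_fps_nth_0: "fps_nth spread_fps 0 = 1"
  using rangeI[of "\<lambda>j. 2 * spread j" 0] by (simp add: spread_fps_def)

lemma spread_fps_functional_eq: "spread_fps = (1 + fps_X)^2 * spread_fps^4"
proof (rule fps_ext)
  fix n :: nat
  note nth_simps = fps_one_plus_X_square_mult_nth_bit fps_power4_nth_bit spread_fps_def
    double_spread_mem_iff[of n]
  consider "n mod 4 = 0" | "n mod 4 = 2" | "n mod 4 = 1 \<or> n mod 4 = 3"
    by arith
  then show "fps_nth spread_fps n = fps_nth ((1 + fps_X)^2 * spread_fps^4) n"
  proof cases
    case 1
    then have "4 dvd n" "n < 2 \<or> \<not> 4 dvd (n - 2)"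
      by presburger+
    with 1 show ?thesis
      by (auto simp: nth_simps)
  next
    case 2
    then have "\<not> 4 dvd n" "\<not> n < 2" "4 dvd (n - 2)" "(n - 2) div 4 = n div 4"
      by presburger+
    with 2 show ?thesis
      by (simp add: nth_simps)
  next
    case 3
    then have "\<not> 4 dvd n" "n < 2 \<or> \<not> 4 dvd (n - 2)" "n mod 4 \<noteq> 0" "n mod 4 \<noteq> 2"
      by presburger+
    then show ?thesis
      by (auto simp: nth_simps)
  qed
qed

lemma spread_fps_cube: "((1 + fps_X) * spread_fps)^3 = 1 + fps_X"
proof -
  have "spread_fps * ((1 + fps_X)^2 * spread_fps^3 - 1) = (1 + fps_X)^2 * spread_fps^4 - spread_fps"
    by algebra
  also have "\<dots> = 0"
    by (simp flip: spread_fps_functional_eq)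
  moreover have "spread_fps \<noteq> 0"
    using spread_fps_nth_0 by (metis fps_zero_nth zero_neq_one)
  ultimately have "(1 + fps_X)^2 * spread_fps^3 = 1"
    by simp
  moreover have "((1 + fps_X) * spread_fps)^3 = (1 + fps_X) * ((1 + fps_X)^2 * spread_fps^3)"
    by algebra
  ultimately show ?thesis
    by simp
qed

lemma fps_cube_eq_imp_eq:
  fixes a b :: "'a::idom fps"
  assumes "(3::'a) \<noteq> 0" "fps_nth a 0 = 1" "fps_nth b 0 = 1" "a^3 = b^3"
  shows "a = b"
proof -
  have "(a - b) * (a^2 + a * b + b^2) = 0"
    using assms(4) by algebra
  moreover have "fps_nth (a^2 + a * b + b^2) 0 = 3"
    using assms(2,3) by (simp add: fps_nth_power_0)
  then have "a^2 + a * b + b^2 \<noteq> 0"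
    using assms(1) by (metis fps_zero_nth)
  ultimately show ?thesis
    by simp
qed

lemma TM_F_inverse_eq_spread_fps:
  fixes G :: "bit fps"
  assumes "fps_nth G 0 = 0" and "fps_compose TM_F G = fps_X"
  shows "fps_X * (1 + G) + 1 = (1 + fps_X) * spread_fps"
proof (rule fps_cube_eq_imp_eq)
  show "(fps_X * (1 + G) + 1)^3 = ((1 + fps_X) * spread_fps)^3"
    by (simp only: TM_F_inverse_cube[OF assms] spread_fps_cube)
qed (simp_all add: spread_fps_nth_0)

lemma TM_F_inverse_nth_eq_1_iff:
  fixes G :: "bit fps"
  assumes "fps_nth G 0 = 0" and "fps_compose TM_F G = fps_X" and "n \<ge> 1"
  shows "fps_nth G n = 1 \<longleftrightarrow> n \<in> range (\<lambda>j. 2 * spread j) \<or> Suc n \<in> range (\<lambda>j. 2 * spread j)"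
    (is "_ \<longleftrightarrow> ?A \<or> ?B")
proof -
  have "fps_nth G n = fps_nth (fps_X * (1 + G) + 1) (Suc n)"
    using assms(3) by simp
  also have "\<dots> = of_bool ?B + of_bool ?A"
    by (simp only: TM_F_inverse_eq_spread_fps[OF assms(1,2)] fps_mult_fps_X_plus_1_nth)
       (simp add: spread_fps_def)
  finally have "fps_nth G n = of_bool ?B + of_bool ?A" .
  moreover have "even m" if "m \<in> range (\<lambda>j. 2 * spread j)" for m
    using that by auto
  then have "\<not> (?A \<and> ?B)"
    using even_Suc by blast
  ultimately show ?thesis
    by (cases ?A; cases ?B) simp_all
qed

section \<open>Enumerating the support\<close>

definition ones_enum :: "nat \<Rightarrow> nat" where
  "ones_enum n = (if even n then 2 * spread (n div 2) else 2 * spread (Suc (n div 2)) - 1)"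

lemma ones_enum_double [simp]: "ones_enum (2 * j) = 2 * spread j"
  by (simp add: ones_enum_def)

lemma ones_enum_Suc_double [simp]: "ones_enum (Suc (2 * j)) = 2 * spread (Suc j) - 1"
  by (simp add: ones_enum_def)

lemma strict_mono_ones_enum: "strict_mono ones_enum"
proof (rule strict_mono_Suc_iff[THEN iffD2], intro allI)
  fix k :: nat
  consider i where "k = 2 * i" | i where "k = Suc (2 * i)"
    by (metis evenE oddE Suc_eq_plus1)
  then show "ones_enum k < ones_enum (Suc k)"
  proof cases
    case 1
    then show ?thesis
      using spread_less_Suc[of i] by simp
  next
    case 2
    then have "ones_enum (Suc k) = 2 * spread (Suc i)"
      by (metis ones_enum_double mult_Suc_right add_2_eq_Suc)
    then show ?thesis
      using 2 spread_pos[of "Suc i"] by simp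
  qed
qed

lemma double_spread_neighbours_eq_range:
  "{m. m \<ge> 1 \<and> (m \<in> range (\<lambda>j. 2 * spread j) \<or> Suc m \<in> range (\<lambda>j. 2 * spread j))}
     = range (\<lambda>k. ones_enum (Suc k))"
proof (intro equalityI subsetI)
  fix m
  assume "m \<in> {m. m \<ge> 1 \<and> (m \<in> range (\<lambda>j. 2 * spread j) \<or> Suc m \<in> range (\<lambda>j. 2 * spread j))}"
  then consider j where "m \<ge> 1" "m = 2 * spread j" | j where "Suc m = 2 * spread j"
    by blast
  then show "m \<in> range (\<lambda>k. ones_enum (Suc k))"
  proof cases
    case 1
    then obtain i where "j = Suc i"
      by (metis not0_implies_Suc spread_0 mult_0_right not_one_le_zero)
    then have "m = ones_enum (Suc (Suc (2 * i)))"
      using 1 by (metis ones_enum_double mult_Suc_right add_2_eq_Suc)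
    then show ?thesis
      by blast
  next
    case 2
    then obtain i where "j = Suc i"
      by (metis not0_implies_Suc spread_0 mult_0_right nat.distinct(1))
    then have "m = ones_enum (Suc (2 * i))"
      using 2 by simp
    then show ?thesis
      by blast
  qed
next
  fix m
  assume "m \<in> range (\<lambda>k. ones_enum (Suc k))"
  then obtain k where m: "m = ones_enum (Suc k)"
    by blast
  consider i where "Suc k = 2 * Suc i" | i where "k = 2 * i"
    by (metis evenE oddE Suc_eq_plus1 mult_Suc_right add_2_eq_Suc)
  then show "m \<in> {m. m \<ge> 1 \<and> (m \<in> range (\<lambda>j. 2 * spread j) \<or> Suc m \<in> range (\<lambda>j. 2 * spread j))}"
  proof cases
    case 1
    then have "m = 2 * spread (Suc i)"
      using m by (metis ones_enum_double)
    then show ?thesis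
      using spread_pos[of "Suc i"] by auto
  next
    case 2
    then have "Suc m = 2 * spread (Suc i)"
      using m spread_pos[of "Suc i"] by simp
    then show ?thesis
      using spread_less_Suc[of i] by auto
  qed
qed

lemma TM_F_inverse_support:
  fixes G :: "bit fps"
  assumes "fps_nth G 0 = 0" and "fps_compose TM_F G = fps_X"
  shows "{m. m \<ge> 1 \<and> fps_nth G m = 1} = range (\<lambda>k. ones_enum (Suc k))"
proof -
  have "{m. m \<ge> 1 \<and> fps_nth G m = 1}
      = {m. m \<ge> 1 \<and> (m \<in> range (\<lambda>j. 2 * spread j) \<or> Suc m \<in> range (\<lambda>j. 2 * spread j))}"
    using TM_F_inverse_nth_eq_1_iff[OF assms] by (intro Collect_cong) blast
  also have "\<dots> = range (\<lambda>k. ones_enum (Suc k))"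
    by (rule double_spread_neighbours_eq_range)
  finally show ?thesis .
qed

lemma enumerate_range_strict_mono:
  fixes f :: "nat \<Rightarrow> nat"
  assumes "strict_mono f"
  shows "enumerate (range f) n = f n"
proof (induction n)
  case 0
  show ?case
    unfolding enumerate_0
    by (rule Least_equality) (use assms in \<open>auto simp: strict_mono_less_eq\<close>)
next
  case (Suc n)
  have "infinite (range f)"
    using assms strict_mono_imp_inj_on range_inj_infinite by blast
  show ?case
    unfolding enumerate_Suc''[OF \<open>infinite (range f)\<close>] Suc
    by (rule Least_equality) (use assms in \<open>auto simp: strict_mono_less strict_mono_less_eq\<close>)
qed

section \<open>Asymptotics of \<open>a\<^sub>n / n\<^sup>2\<close>\<close>

definition ones_ratio :: "nat \<Rightarrow> real" where
  "ones_ratio n = real (ones_enum n) / real n ^ 2"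

lemma ones_enum_bounds: "n^2 \<le> 6 * ones_enum n \<and> 2 * ones_enum n \<le> n^2 + 2 * n"
proof -
  obtain i where "n = 2 * i \<or> n = Suc (2 * i)"
    by (metis evenE oddE Suc_eq_plus1)
  then show ?thesis
  proof
    assume n: "n = 2 * i"
    have "i^2 + 2 * i \<le> 3 * spread i" "spread i \<le> i^2"
      by (rule square_add_double_le_spread, rule spread_le_square)
    with n show ?thesis
      by (simp add: power2_eq_square)
  next
    assume n: "n = Suc (2 * i)"
    have "(Suc i)^2 + 2 * Suc i \<le> 3 * spread (Suc i)" "spread (Suc i) \<le> (Suc i)^2"
      by (rule square_add_double_le_spread, rule spread_le_square)
    with n show ?thesis
      by (simp add: power2_eq_square) (intro conjI; linarith)
  qed
qed

lemma ones_ratio_ge: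
  assumes "n \<ge> 1"
  shows "1/6 \<le> ones_ratio n"
proof -
  have "real n ^ 2 / 6 \<le> real (ones_enum n)"
    using ones_enum_bounds[of n] by (simp flip: of_nat_power of_nat_le_iff)
  then have "(real n ^ 2 / 6) / real n ^ 2 \<le> ones_ratio n"
    unfolding ones_ratio_def by (rule divide_right_mono) simp
  then show ?thesis
    using assms by simp
qed

lemma ones_ratio_le:
  assumes "n \<ge> 1"
  shows "ones_ratio n \<le> 1/2 + 1 / real n"
proof -
  have "real (ones_enum n) \<le> (real n ^ 2 + 2 * real n) / 2"
    using ones_enum_bounds[of n] by (simp flip: of_nat_power of_nat_mult of_nat_add of_nat_le_iff)
  then have "ones_ratio n \<le> ((real n ^ 2 + 2 * real n) / 2) / real n ^ 2"
    unfolding ones_ratio_def by (rule divide_right_mono) simp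
  also have "\<dots> = 1/2 + 1 / real n"
    using assms by (simp add: field_simps power2_eq_square)
  finally show ?thesis .
qed

lemma ones_ratio_double: "ones_ratio (2 * j) = real (spread j) / (2 * real j ^ 2)"
  by (simp add: ones_ratio_def power2_eq_square)

lemma ones_ratio_double_power2: "ones_ratio (2 * 2^k) = 1/2"
proof -
  have "((2::real)^k)^2 = 4^k"
    by (simp add: power2_eq_square flip: power_mult_distrib)
  then show ?thesis
    by (simp add: ones_ratio_double spread_power2)
qed

lemma ones_ratio_double_mersenne:
  "ones_ratio (2 * (2^Suc k - 1)) = 1/6 + 1 / (3 * (2^Suc k - 1))"
proof -
  define m :: nat where "m = 2^Suc k - 1"
  have "(1::nat) \<le> 2^k"
    by simp
  then have m: "real m = 2^Suc k - 1" "m \<ge> 1"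
    unfolding m_def power_Suc by (simp add: of_nat_diff, linarith)
  have "3 * real (spread m) = real m ^ 2 + 2 * real m"
    using spread_mersenne[of "Suc k"] unfolding m_def[symmetric] by (metis of_nat_add of_nat_mult of_nat_numeral of_nat_power)
  then have "ones_ratio (2 * m) = 1/6 + 1 / (3 * real m)"
    using m(2) unfolding ones_ratio_double by (simp add: field_simps power2_eq_square)
  then show ?thesis
    by (simp add: m(1) m_def)
qed

lemma ones_ratio_double_Suc_ge:
  assumes "j \<ge> 1"
  shows "ones_ratio (2 * j) - 1 / real j \<le> ones_ratio (2 * Suc j)"
proof -
  define x s s' where "x = real j" and "s = real (spread j)" and "s' = real (spread (Suc j))"
  have x: "1 \<le> x" and s: "0 \<le> s" "s \<le> x^2" "s \<le> s'"
    using assms spread_le_square[of j] spread_less_Suc[of j]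
    unfolding x_def s_def s'_def by (simp_all flip: of_nat_power)
  have "s / (2 * x^2) - s' / (2 * (x + 1)^2) \<le> s / (2 * x^2) - s / (2 * (x + 1)^2)"
    using s x by (simp add: divide_right_mono)
  also have "\<dots> = s * (2 * x + 1) / (2 * x^2 * (x + 1)^2)"
    using x by (simp add: field_simps) (simp add: algebra_simps power2_eq_square)
  also have "\<dots> \<le> x^2 * (2 * x + 1) / (2 * x^2 * (x + 1)^2)"
    using s x by (intro divide_right_mono mult_right_mono) auto
  also have "\<dots> = (2 * x + 1) / (2 * (x + 1)^2)"
    using x by (simp add: field_simps)
  also have "\<dots> \<le> 1 / x"
  proof -
    have "2 * (x + 1)^2 - (2 * x + 1) * x = 3 * x + 2"
      by (simp add: power2_eq_square algebra_simps)
    then have "(2 * x + 1) * x \<le> 2 * (x + 1)^2"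
      using x by linarith
    then show ?thesis
      using x by (simp add: divide_simps)
  qed
  finally show ?thesis
    using ones_ratio_double[of j] ones_ratio_double[of "Suc j"]
    by (simp add: x_def s_def s'_def add_ac)
qed

lemma liminf_ones_ratio: "liminf (\<lambda>n. ereal (ones_ratio n)) = ereal (1/6)"
proof (rule antisym)
  define \<sigma> :: "nat \<Rightarrow> nat" where "\<sigma> k = 2 * (2^Suc k - 1)" for k
  have "strict_mono \<sigma>"
    unfolding strict_mono_Suc_iff \<sigma>_def by (auto intro!: diff_less_mono)
  moreover have "(\<lambda>k. 1/6 + 1 / (3 * (2^Suc k - 1)) :: real) \<longlonglongrightarrow> 1/6"
    by real_asymp
  then have "((\<lambda>n. ereal (ones_ratio n)) \<circ> \<sigma>) \<longlonglongrightarrow> ereal (1/6)"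
    unfolding comp_def \<sigma>_def ones_ratio_double_mersenne by (rule tendsto_ereal)
  ultimately show "liminf (\<lambda>n. ereal (ones_ratio n)) \<le> ereal (1/6)"
    using liminf_subseq_mono lim_imp_Liminf[OF sequentially_bot] by metis
next
  show "ereal (1/6) \<le> liminf (\<lambda>n. ereal (ones_ratio n))"
    by (rule Liminf_bounded) (use ones_ratio_ge in \<open>auto simp: eventually_sequentially\<close>)
qed

lemma limsup_ones_ratio: "limsup (\<lambda>n. ereal (ones_ratio n)) = ereal (1/2)"
proof (rule antisym)
  have "limsup (\<lambda>n. ereal (ones_ratio n)) \<le> limsup (\<lambda>n. ereal (1/2 + 1 / real n))"
    by (rule Limsup_mono) (use ones_ratio_le in \<open>auto simp: eventually_sequentially\<close>)
  moreover have "(\<lambda>n. 1/2 + 1 / real n) \<longlonglongrightarrow> 1/2"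
    by real_asymp
  then have "limsup (\<lambda>n. ereal (1/2 + 1 / real n)) = ereal (1/2)"
    by (intro lim_imp_Limsup tendsto_ereal) simp_all
  ultimately show "limsup (\<lambda>n. ereal (ones_ratio n)) \<le> ereal (1/2)"
    by simp
next
  have "strict_mono (\<lambda>k. 2 * 2^k :: nat)"
    by (simp add: strict_mono_Suc_iff)
  then have "limsup ((\<lambda>n. ereal (ones_ratio n)) \<circ> (\<lambda>k. 2 * 2^k)) \<le> limsup (\<lambda>n. ereal (ones_ratio n))"
    by (rule limsup_subseq_mono)
  then show "ereal (1/2) \<le> limsup (\<lambda>n. ereal (ones_ratio n))"
    by (simp add: comp_def ones_ratio_double_power2 Limsup_const)
qed

lemma discrete_ivt:
  fixes y :: "nat \<Rightarrow> real"
  assumes start: "v \<le> y 0" and steps: "\<And>i. i < N \<Longrightarrow> y i - d \<le> y (Suc i)"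
    and stop: "y N \<le> v + d"
  shows "\<exists>i\<le>N. \<bar>y i - v\<bar> \<le> d"
proof (cases "\<forall>i\<le>N. v \<le> y i")
  case True
  with stop show ?thesis
    by (intro exI[of _ N]) auto
next
  case False
  define m where "m = (LEAST i. i \<le> N \<and> y i < v)"
  have "\<exists>i. i \<le> N \<and> y i < v"
    using False by (auto simp: not_le)
  then have "m \<le> N \<and> y m < v"
    unfolding m_def by (rule LeastI_ex)
  then have m: "m \<le> N" "y m < v"
    by auto
  then obtain p where p: "m = Suc p"
    using start by (cases m) auto
  then have "v \<le> y p"
    using m not_less_Least[of p "\<lambda>i. i \<le> N \<and> y i < v"] unfolding m_def by auto
  moreover have "y p - d \<le> y m"
    using steps[of p] m p by simp
  ultimately show ?thesis
    using m by (intro exI[of _ m]) auto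
qed

lemma ones_ratio_dense: "{1/6 .. 1/2} \<subseteq> closure {ones_ratio n | n. n \<ge> 1}"
proof
  fix x :: real
  assume x: "x \<in> {1/6 .. 1/2}"
  show "x \<in> closure {ones_ratio n | n. n \<ge> 1}"
  proof (rule closure_approachable[THEN iffD2], intro allI impI)
    fix e :: real
    assume "e > 0"
    obtain L where "1 / e < 2^L"
      using real_arch_pow[of 2 "1 / e"] by auto
    define K :: nat where "K = 2^L"
    have K: "K \<ge> 1" "1 / real K < e"
      using \<open>e > 0\<close> \<open>1 / e < 2^L\<close> unfolding K_def by (simp_all add: field_simps)
    \<comment> \<open>Along \<open>2 (K + i)\<close> the ratio falls from \<open>1/2\<close> to about \<open>1/6\<close> in steps of at most \<open>1/K\<close>.\<close>
    define y where "y i = ones_ratio (2 * (K + i))" for i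
    have "x \<le> y 0"
      using x ones_ratio_double_power2[of L] unfolding y_def K_def by simp
    moreover have "y i - 1 / real K \<le> y (Suc i)" for i
    proof -
      have "1 / real (K + i) \<le> 1 / real K"
        using K by (simp add: frac_le)
      then show ?thesis
        using ones_ratio_double_Suc_ge[of "K + i"] K unfolding y_def by simp
    qed
    moreover have "y (K - 1) \<le> x + 1 / real K"
    proof -
      have "K + (K - 1) = 2^Suc L - 1"
        using K unfolding K_def by simp
      then have "y (K - 1) = 1/6 + 1 / (3 * (2 * real K - 1))"
        using ones_ratio_double_mersenne[of L] unfolding y_def K_def by simp
      also have "\<dots> \<le> 1/6 + 1 / real K"
      proof -
        have "1 \<le> real K"
          using K by simp
        then have "real K \<le> 3 * (2 * real K - 1)"
          by (simp add: algebra_simps)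
        then show ?thesis
          using \<open>1 \<le> real K\<close> by (simp add: frac_le)
      qed
      finally show ?thesis
        using x by simp
    qed
    ultimately obtain i where "\<bar>y i - x\<bar> \<le> 1 / real K"
      using discrete_ivt[of x y "K - 1" "1 / real K"] by blast
    moreover have "y i \<in> {ones_ratio n | n. n \<ge> 1}"
      unfolding y_def using K by (intro CollectI exI[of _ "2 * (K + i)"]) simp
    ultimately show "\<exists>r\<in>{ones_ratio n | n. n \<ge> 1}. dist r x < e"
      using K by (intro bexI[of _ "y i"]) (simp_all add: dist_real_def)
  qed
qed

theorem mainTheorem10:
  fixes G :: "bit fps" and a :: "nat \<Rightarrow> nat"
  assumes G0: "fps_nth G 0 = 0"
    and inv1: "fps_compose TM_F G = fps_X"
    and inv2: "fps_compose G TM_F = fps_X"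
    and a_def: "\<And>n. a n = (if n = 0 then 0
                  else enumerate {m. m \<ge> 1 \<and> fps_nth G m = 1} (n - 1))"
  shows "infinite {m. m \<ge> 1 \<and> fps_nth G m = 1}
    \<and> liminf (\<lambda>n. ereal (real (a n) / real n ^ 2)) = ereal (1/6)
    \<and> limsup (\<lambda>n. ereal (real (a n) / real n ^ 2)) = ereal (1/2)
    \<and> {1/6 .. 1/2} \<subseteq> closure {real (a n) / real n ^ 2 | n. n \<ge> 1}"
proof -
  note ones = TM_F_inverse_support[OF G0 inv1]
  have mono: "strict_mono (\<lambda>k. ones_enum (Suc k))"
    using strict_mono_ones_enum by (simp add: strict_mono_Suc_iff)
  then have "infinite {m. m \<ge> 1 \<and> fps_nth G m = 1}"
    unfolding ones using range_inj_infinite strict_mono_imp_inj_on by blast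
  moreover have "a = ones_enum"
  proof
    fix n
    show "a n = ones_enum n"
    proof (cases n)
      case 0
      then show ?thesis
        by (simp add: a_def ones_enum_def)
    next
      case (Suc k)
      then show ?thesis
        by (simp only: a_def ones enumerate_range_strict_mono[OF mono]) simp
    qed
  qed
  ultimately show ?thesis
    using liminf_ones_ratio limsup_ones_ratio ones_ratio_dense unfolding ones_ratio_def by simp
qed

end
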